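(* Let $H$ be the Hilbert transform on $\mathbb{R}$ and $b(x)=\log|x|$. There exist constants $c_5,c_6>0$ such that for all $1<p<\infty$, \[ \|H\|_{L^p(\mathbb{R})\to L^{p,\infty}(\mathbb{R})}\ge c_5\,p,\qquad \|[b,H]\|_{L^p(\mathbb{R})\to L^{p,\infty}(\mathbb{R})}\ge c_6\max\{p',p^2\}. \]
   Context: $Hf(x)=\mathrm{p.v.}\int_{\mathbb{R}}\frac{f(y)}{x-y}\,dy$; $[b,H]f=bHf-H(bf)$; $p'=p/(p-1)$; $L^{p,\infty}$ has quasi-norm $\sup_{\lambda>0}\lambda|\{|g|>\lambda\}|^{1/p}$. *)

theory Defs
  imports "HOL-Analysis.Analysis"
begin

text \<open>Truncated Hilbert integral and the principal value Hilbert transform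
  Hf(x) = p.v. int f(y)/(x-y) dy  (no 1/pi normalisation), as a limit eps -> 0+.\<close>
definition hilbert :: "(real \<Rightarrow> real) \<Rightarrow> real \<Rightarrow> real" where
  "hilbert f x = Lim (at_right 0)
     (\<lambda>\<epsilon>. LINT y|lebesgue. indicator {y. \<epsilon> < \<bar>x - y\<bar>} y * f y / (x - y))"

definition commH :: "(real \<Rightarrow> real) \<Rightarrow> (real \<Rightarrow> real) \<Rightarrow> real \<Rightarrow> real" where
  "commH b f x = b x * hilbert f x - hilbert (\<lambda>y. b y * f y) x"

definition in_Lp :: "real \<Rightarrow> (real \<Rightarrow> real) \<Rightarrow> bool" where
  "in_Lp p f \<longleftrightarrow> f \<in> borel_measurable lebesgue \<and> integrable lebesgue (\<lambda>x. \<bar>f x\<bar> powr p)"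

definition Lp_norm :: "real \<Rightarrow> (real \<Rightarrow> real) \<Rightarrow> real" where
  "Lp_norm p f = (LINT x|lebesgue. \<bar>f x\<bar> powr p) powr (1 / p)"

text \<open>Weak L^p quasi-norm sup_{lambda>0} lambda |{|g|>lambda}|^(1/p), computed as
  (sup_{lambda>0} lambda^p |{|g|>lambda}|)^(1/p), with value infinity allowed.\<close>
definition weakLp_norm :: "real \<Rightarrow> (real \<Rightarrow> real) \<Rightarrow> ereal" where
  "weakLp_norm p g =
     (let M = (SUP t\<in>{0<..}. ennreal (t powr p) * emeasure lebesgue {x. t < \<bar>g x\<bar>})
      in if M = \<infinity> then \<infinity> else ereal (enn2real M powr (1 / p)))"

definition op_norm_Lp_weak :: "real \<Rightarrow> ((real \<Rightarrow> real) \<Rightarrow> (real \<Rightarrow> real)) \<Rightarrow> ereal" where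
  "op_norm_Lp_weak p T =
     (SUP f\<in>{f. in_Lp p f \<and> Lp_norm p f > 0}. weakLp_norm p (T f) / ereal (Lp_norm p f))"

end

theory Submission
  imports Defs
begin

text \<open>Test both operators on indicators of intervals and look just to the left of the support.
  For f = 1 on [d,1] with d = exp(-2p), so that the L^p norm of f is at most 1, and -d < x < 0,
  the kernel 1/(y - x) is at least 1/(2y) on [d,1]; hence |Hf(x)| \<ge> ln(1/d)/2 = p and
  |[ln|.|, H]f(x)| \<ge> (ln d)^2/4 = p^2. The set (-d,0) has measure d and d^(1/p) = exp(-2),
  which gives the bounds of order p and p^2. For p' take f = 1 on [1,2] and A = exp(2/(p-1)):
  on (-2A,-A) the commutator has size ln A / A, and (ln A / A) A^(1/p) is of order 1/(p-1).
  The analytic input is that for a density Lipschitz on [a,b] the principal value exists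
  off {a,b}, which makes these outputs Lebesgue measurable.\<close>

lemma
  fixes F :: "real \<Rightarrow> real"
  assumes "continuous_on {c..d} F"
  shows integrable_indicator_continuous_interval:
      "integrable lebesgue (\<lambda>y. indicator {c..d} y * F y)"
    and lebesgue_integral_indicator_continuous_interval:
      "(LINT y|lebesgue. indicator {c..d} y * F y) = integral {c..d} F"
proof -
  have si: "set_integrable lebesgue {c..d} F"
    using absolutely_integrable_continuous_real[OF assms] .
  then show "integrable lebesgue (\<lambda>y. indicator {c..d} y * F y)"
    by (simp add: set_integrable_def)
  show "(LINT y|lebesgue. indicator {c..d} y * F y) = integral {c..d} F"
    using set_lebesgue_integral_eq_integral(2)[OF si] by (simp add: set_lebesgue_integral_def)
qed

lemma integral_real_derivative:
  fixes f f' :: "real \<Rightarrow> real"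
  assumes "c \<le> d" "\<And>x. x \<in> {c..d} \<Longrightarrow> (f has_real_derivative f' x) (at x)"
  shows "integral {c..d} f' = f d - f c"
proof -
  have "(f' has_integral (f d - f c)) {c..d}"
    using assms by (intro fundamental_theorem_of_calculus)
      (simp_all add: has_real_derivative_iff_has_vector_derivative[symmetric] has_field_derivative_at_within)
  then show ?thesis by (rule integral_unique)
qed

subsection \<open>Principal values of Lipschitz densities on an interval\<close>

definition trunc_hilbert :: "real \<Rightarrow> (real \<Rightarrow> real) \<Rightarrow> real \<Rightarrow> real" where
  "trunc_hilbert \<epsilon> f x = (LINT y|lebesgue. indicator {y. \<epsilon> < \<bar>x - y\<bar>} y * f y / (x - y))"

lemma hilbert_eqI: "((\<lambda>\<epsilon>. trunc_hilbert \<epsilon> f x) \<longlongrightarrow> c) (at_right 0) \<Longrightarrow> hilbert f x = c"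
  unfolding hilbert_def trunc_hilbert_def by (rule tendsto_Lim) auto

lemma
  fixes a b x e :: real
  assumes "a < x" "x < b" "0 < e" "e < x - a" "e < b - x"
  shows integrable_trunc_hilbert_kernel_interval:
      "integrable lebesgue (\<lambda>y. indicator {y. e < \<bar>x - y\<bar>} y * indicator {a..b} y / (x - y))"
    and trunc_hilbert_indicator_interval:
      "trunc_hilbert e (indicator {a..b}) x = ln (x - a) - ln (b - x)"
proof -
  have c1: "continuous_on {a..x-e} (\<lambda>y. 1 / (x - y))" and c2: "continuous_on {x+e..b} (\<lambda>y. 1 / (x - y))"
    using assms by (intro continuous_intros; auto)+
  have i1: "integral {a..x-e} (\<lambda>y. 1 / (x - y)) = ln (x - a) - ln e"
  proof -
    have "integral {a..x-e} (\<lambda>y. 1 / (x - y)) = (- ln (x - (x - e))) - (- ln (x - a))"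
      using assms by (intro integral_real_derivative) (auto intro!: derivative_eq_intros)
    then show ?thesis by simp
  qed
  have i2: "integral {x+e..b} (\<lambda>y. 1 / (x - y)) = ln e - ln (b - x)"
  proof -
    have "integral {x+e..b} (\<lambda>y. 1 / (x - y)) = (- ln (b - x)) - (- ln ((x + e) - x))"
      using assms by (intro integral_real_derivative)
        (auto intro!: derivative_eq_intros simp: minus_divide_right)
    then show ?thesis by simp
  qed
  have ae: "AE y in lebesgue. indicator {y. e < \<bar>x - y\<bar>} y * indicator {a..b} y / (x - y)
      = indicator {a..x-e} y * (1 / (x - y)) + indicator {x+e..b} y * (1 / (x - y))"
  proof -
    have "AE y in lebesgue. y \<noteq> x - e \<and> y \<noteq> x + e"
      by (intro AE_completion AE_conjI AE_lborel_singleton)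
    then show ?thesis
      by eventually_elim (use assms in \<open>auto simp: indicator_def\<close>)
  qed
  have int: "integrable lebesgue (\<lambda>y. indicator {a..x-e} y * (1 / (x - y)) + indicator {x+e..b} y * (1 / (x - y)))"
    using integrable_indicator_continuous_interval[OF c1] integrable_indicator_continuous_interval[OF c2]
    by simp
  have meas: "(\<lambda>y. indicator {y. e < \<bar>x - y\<bar>} y * indicator {a..b} y / (x - y)) \<in> borel_measurable lebesgue"
    by (rule measurable_completion) measurable
  show "integrable lebesgue (\<lambda>y. indicator {y. e < \<bar>x - y\<bar>} y * indicator {a..b} y / (x - y))"
    using integrable_cong_AE_imp[OF int meas] ae by (simp add: eq_commute)
  have "trunc_hilbert e (indicator {a..b}) x
     = (LINT y|lebesgue. indicator {a..x-e} y * (1 / (x - y)) + indicator {x+e..b} y * (1 / (x - y)))"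
    unfolding trunc_hilbert_def by (rule integral_cong_AE[OF meas _ ae]) (use int in auto)
  also have "\<dots> = ln (x - a) - ln (b - x)"
    using lebesgue_integral_indicator_continuous_interval[OF c1]
      lebesgue_integral_indicator_continuous_interval[OF c2]
      integrable_indicator_continuous_interval[OF c1]
      integrable_indicator_continuous_interval[OF c2] i1 i2
    by (simp add: Bochner_Integration.integral_add)
  finally show "trunc_hilbert e (indicator {a..b}) x = ln (x - a) - ln (b - x)" .
qed

text \<open>The principal value of the integral of g y / (x - y) over [a,b]: for a < x < b the term g x
  is split off, leaving an absolutely integrable kernel, and the principal value of the
  remaining 1/(x - y) is ln (x - a) - ln (b - x).\<close>
definition pv_interval :: "(real \<Rightarrow> real) \<Rightarrow> real \<Rightarrow> real \<Rightarrow> real \<Rightarrow> real" where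
  "pv_interval g a b x =
     (LINT y|lebesgue. indicator {a..b} y * (g y - g x * indicator {a<..<b} x) / (x - y))
     + indicator {a<..<b} x * g x * (ln (x - a) - ln (b - x))"

lemma trunc_hilbert_eventually_eq_pv_interval:
  assumes "x < a \<or> b < x"
  shows "\<forall>\<^sub>F e in at_right 0. trunc_hilbert e (\<lambda>y. g y * indicator {a..b} y) x = pv_interval g a b x"
proof -
  define d where "d = (if x < a then a - x else x - b)"
  have "d > 0" using assms by (auto simp: d_def)
  then show ?thesis
  proof (rule eventually_at_right_real[THEN eventually_mono])
    fix e assume e: "e \<in> {0<..<d}"
    have "y \<in> {a..b} \<Longrightarrow> e < \<bar>x - y\<bar>" for y
      using assms e by (auto simp: d_def)
    then have "(\<lambda>y. indicator {y. e < \<bar>x - y\<bar>} y * (g y * indicator {a..b} y) / (x - y))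
        = (\<lambda>y. indicator {a..b} y * (g y - g x * indicator {a<..<b} x) / (x - y))"
      using assms by (auto simp: indicator_def)
    moreover have "indicator {a<..<b} x = (0::real)"
      using assms by (auto simp: indicator_def)
    ultimately show "trunc_hilbert e (\<lambda>y. g y * indicator {a..b} y) x = pv_interval g a b x"
      using assms by (simp add: trunc_hilbert_def pv_interval_def)
  qed
qed

lemma trunc_hilbert_pv_interval_estimate:
  assumes g[measurable]: "g \<in> borel_measurable borel" and lip: "L-lipschitz_on {a..b} g"
    and x: "a < x" "x < b" and e: "0 < e" "e < x - a" "e < b - x"
  shows "\<bar>trunc_hilbert e (\<lambda>y. g y * indicator {a..b} y) x - pv_interval g a b x\<bar> \<le> 2 * L * e"
proof -
  have L0: "0 \<le> L" using lip by (simp add: lipschitz_on_def)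
  define K where "K y = indicator {a..b} y * (g y - g x) / (x - y)" for y
  have K_bound: "\<bar>K y\<bar> \<le> indicator {a..b} y * L" for y
  proof (cases "y \<in> {a..b} \<and> y \<noteq> x")
    case True
    have "\<bar>K y\<bar> = \<bar>g y - g x\<bar> / \<bar>x - y\<bar>" using True by (simp add: K_def abs_divide)
    also have "\<dots> \<le> L * \<bar>y - x\<bar> / \<bar>x - y\<bar>"
      using lipschitz_onD[OF lip, of y x] True x by (intro divide_right_mono) (auto simp: dist_real_def)
    also have "\<dots> = L" using True by (simp add: abs_minus_commute)
    finally show ?thesis using True by simp
  next
    case False then show ?thesis using L0 by (auto simp: K_def indicator_def)
  qed
  have K_meas[measurable]: "K \<in> borel_measurable lebesgue"
    unfolding K_def by (rule measurable_completion) measurable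
  have bound_int: "integrable lebesgue (\<lambda>y. indicator {a..b} y * L)"
    using integrable_indicator_continuous_interval[of a b "\<lambda>_. L"] by simp
  have K_int: "integrable lebesgue K"
    by (rule Bochner_Integration.integrable_bound[OF bound_int K_meas]) (use K_bound L0 in auto)
  define Ke where "Ke y = indicator {y. e < \<bar>x - y\<bar>} y * K y" for y
  have Ke_meas: "Ke \<in> borel_measurable lebesgue"
    unfolding Ke_def K_def by (rule measurable_completion) measurable
  have "norm (Ke y) \<le> norm (indicator {a..b} y * L)" for y
    using K_bound[of y] L0 by (auto simp: Ke_def indicator_def)
  then have Ke_int: "integrable lebesgue Ke"
    by (intro Bochner_Integration.integrable_bound[OF bound_int Ke_meas] AE_I2)
  define J where "J y = indicator {y. e < \<bar>x - y\<bar>} y * indicator {a..b} y / (x - y)" for y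
  have J_int: "integrable lebesgue J"
    unfolding J_def by (rule integrable_trunc_hilbert_kernel_interval[OF x e])
  have "indicator {y. e < \<bar>x - y\<bar>} y * (g y * indicator {a..b} y) / (x - y) = Ke y + g x * J y" for y
    by (auto simp: Ke_def K_def J_def indicator_def diff_divide_distrib)
  then have "trunc_hilbert e (\<lambda>y. g y * indicator {a..b} y) x = (LINT y|lebesgue. Ke y + g x * J y)"
    by (simp add: trunc_hilbert_def)
  also have "\<dots> = (LINT y|lebesgue. Ke y) + g x * (LINT y|lebesgue. J y)"
    using Ke_int J_int by simp
  also have "(LINT y|lebesgue. J y) = ln (x - a) - ln (b - x)"
    using trunc_hilbert_indicator_interval[OF x e] by (simp add: J_def trunc_hilbert_def)
  finally have "trunc_hilbert e (\<lambda>y. g y * indicator {a..b} y) x - pv_interval g a b x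
      = (LINT y|lebesgue. Ke y - K y)"
    using x Ke_int K_int by (simp add: pv_interval_def K_def[symmetric] Bochner_Integration.integral_diff)
  also have "\<bar>\<dots>\<bar> \<le> (LINT y|lebesgue. indicator {x-e..x+e} y * L)"
  proof (rule integral_abs_bound_integral)
    show "integrable lebesgue (\<lambda>y. Ke y - K y)" using Ke_int K_int by simp
    show "integrable lebesgue (\<lambda>y. indicator {x-e..x+e} y * L)"
      using integrable_indicator_continuous_interval[of "x-e" "x+e" "\<lambda>_. L"] by simp
    show "\<bar>Ke y - K y\<bar> \<le> indicator {x - e..x + e} y * L" for y
      using K_bound[of y] L0 by (cases "y \<in> {a..b}") (auto simp: Ke_def indicator_def)
  qed
  also have "\<dots> = 2 * L * e"
    using lebesgue_integral_indicator_continuous_interval[of "x-e" "x+e" "\<lambda>_. L"] e by simp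
  finally show ?thesis .
qed

lemma hilbert_lipschitz_indicator_interval:
  assumes g: "g \<in> borel_measurable borel" and lip: "L-lipschitz_on {a..b} g"
    and "x \<noteq> a" "x \<noteq> b"
  shows "hilbert (\<lambda>y. g y * indicator {a..b} y) x = pv_interval g a b x"
proof (rule hilbert_eqI, cases "a < x \<and> x < b")
  case True
  define m where "m = min (x - a) (b - x)"
  have "m > 0" using True by (simp add: m_def)
  then have "\<forall>\<^sub>F e in at_right 0.
      norm (trunc_hilbert e (\<lambda>y. g y * indicator {a..b} y) x - pv_interval g a b x) \<le> 2 * L * e"
    by (rule eventually_at_right_real[THEN eventually_mono])
      (use True in \<open>auto simp: m_def intro!: trunc_hilbert_pv_interval_estimate[OF g lip]\<close>)
  moreover have "((\<lambda>e. 2 * L * e) \<longlongrightarrow> 0) (at_right 0)"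
    by (auto intro!: tendsto_eq_intros)
  ultimately show "((\<lambda>e. trunc_hilbert e (\<lambda>y. g y * indicator {a..b} y) x) \<longlongrightarrow> pv_interval g a b x) (at_right 0)"
    by (subst LIM_zero_iff[symmetric]) (rule Lim_null_comparison)
next
  case False
  then have "x < a \<or> b < x" using assms by auto
  then show "((\<lambda>e. trunc_hilbert e (\<lambda>y. g y * indicator {a..b} y) x) \<longlongrightarrow> pv_interval g a b x) (at_right 0)"
    by (rule tendsto_eventually[OF trunc_hilbert_eventually_eq_pv_interval])
qed

lemma pv_interval_measurable:
  assumes [measurable]: "g \<in> borel_measurable borel"
  shows "pv_interval g a b \<in> borel_measurable lebesgue"
proof -
  have "pv_interval g a b = (\<lambda>x.
      (LINT y|lborel. indicator {a..b} y * (g y - g x * indicator {a<..<b} x) / (x - y))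
      + indicator {a<..<b} x * g x * (ln (x - a) - ln (b - x)))"
    unfolding pv_interval_def by (subst integral_completion) auto
  also have "\<dots> \<in> borel_measurable lebesgue"
    by (rule measurable_completion) measurable
  finally show ?thesis .
qed

lemma hilbert_lipschitz_indicator_measurable:
  assumes "g \<in> borel_measurable borel" "L-lipschitz_on {a..b} g"
  shows "hilbert (\<lambda>y. g y * indicator {a..b} y) \<in> borel_measurable lebesgue"
proof (rule borel_measurable_AE[OF pv_interval_measurable[OF assms(1)]])
  have "AE x in lebesgue. x \<noteq> a \<and> x \<noteq> b"
    by (intro AE_completion AE_conjI AE_lborel_singleton)
  then show "AE x in lebesgue. pv_interval g a b x = hilbert (\<lambda>y. g y * indicator {a..b} y) x"
    by eventually_elim (simp add: hilbert_lipschitz_indicator_interval[OF assms])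
qed

lemma hilbert_lipschitz_indicator_outside:
  assumes "g \<in> borel_measurable borel" and lip: "L-lipschitz_on {a..b} g" and x: "x < a" "a \<le> b"
  shows "hilbert (\<lambda>y. g y * indicator {a..b} y) x = integral {a..b} (\<lambda>y. g y / (x - y))"
proof -
  have "continuous_on {a..b} (\<lambda>y. g y / (x - y))"
    using lipschitz_on_continuous_on[OF lip] x by (intro continuous_intros) auto
  then have "(LINT y|lebesgue. indicator {a..b} y * (g y / (x - y))) = integral {a..b} (\<lambda>y. g y / (x - y))"
    by (rule lebesgue_integral_indicator_continuous_interval)
  moreover have "x \<noteq> a" "x \<noteq> b" "x \<notin> {a<..<b}" using x by auto
  ultimately show ?thesis
    by (simp add: hilbert_lipschitz_indicator_interval[OF assms(1,2)] pv_interval_def)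
qed

lemma lipschitz_on_ln_abs:
  fixes a b :: real
  assumes "0 < a"
  shows "(1 / a)-lipschitz_on {a..b} (\<lambda>y. ln \<bar>y\<bar>)"
proof (rule lipschitz_onI)
  have ln_diff: "ln u - ln v \<le> (1 / a) * \<bar>u - v\<bar>" if "u \<ge> a" "v \<ge> a" for u v
  proof -
    have "ln u - ln v = ln (u / v)" using that assms by (simp add: ln_div)
    also have "\<dots> \<le> u / v - 1" using that assms by (intro ln_le_minus_one) auto
    also have "\<dots> = (u - v) / v" using that assms by (simp add: field_simps)
    also have "\<dots> \<le> \<bar>u - v\<bar> / v" using that assms by (intro divide_right_mono) auto
    also have "\<dots> \<le> \<bar>u - v\<bar> / a" using that assms by (intro divide_left_mono) auto
    finally show ?thesis by simp
  qed
  fix u v assume "u \<in> {a..b}" "v \<in> {a..b}"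
  then show "dist (ln \<bar>u\<bar>) (ln \<bar>v\<bar>) \<le> 1 / a * dist u v"
    using ln_diff[of u v] ln_diff[of v u] assms by (auto simp: dist_real_def abs_minus_commute)
qed (use assms in simp)

lemma
  fixes a b :: real
  assumes "0 < a" "a \<le> b"
  shows hilbert_indicator_measurable: "hilbert (indicator {a..b}) \<in> borel_measurable lebesgue"
    and hilbert_indicator_left: "x < a \<Longrightarrow> hilbert (indicator {a..b}) x = integral {a..b} (\<lambda>y. 1 / (x - y))"
    and hilbert_ln_indicator_measurable:
      "hilbert (\<lambda>y. ln \<bar>y\<bar> * indicator {a..b} y) \<in> borel_measurable lebesgue"
    and hilbert_ln_indicator_left:
      "x < a \<Longrightarrow> hilbert (\<lambda>y. ln \<bar>y\<bar> * indicator {a..b} y) x = integral {a..b} (\<lambda>y. ln \<bar>y\<bar> / (x - y))"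
proof -
  have one: "indicator {a..b} = (\<lambda>y. 1 * indicator {a..b} y :: real)" by simp
  note const = lipschitz_on_constant[of "{a..b}" 1]
  note ln_abs = lipschitz_on_ln_abs[OF assms(1), of b]
  show "hilbert (indicator {a..b}) \<in> borel_measurable lebesgue"
    by (subst one) (rule hilbert_lipschitz_indicator_measurable[OF _ const]; simp)
  show "x < a \<Longrightarrow> hilbert (indicator {a..b}) x = integral {a..b} (\<lambda>y. 1 / (x - y))"
    by (subst one) (rule hilbert_lipschitz_indicator_outside[OF _ const]; use assms in simp)
  show "hilbert (\<lambda>y. ln \<bar>y\<bar> * indicator {a..b} y) \<in> borel_measurable lebesgue"
    by (rule hilbert_lipschitz_indicator_measurable[OF _ ln_abs]) simp
  show "x < a \<Longrightarrow> hilbert (\<lambda>y. ln \<bar>y\<bar> * indicator {a..b} y) x = integral {a..b} (\<lambda>y. ln \<bar>y\<bar> / (x - y))"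
    by (rule hilbert_lipschitz_indicator_outside[OF _ ln_abs]) (use assms in simp_all)
qed

lemma
  fixes a b :: real
  assumes "0 < a" "a < b"
  shows commH_ln_indicator_measurable:
      "commH (\<lambda>x. ln \<bar>x\<bar>) (indicator {a..b}) \<in> borel_measurable lebesgue"
    and commH_ln_indicator_negative:
      "x < 0 \<Longrightarrow> commH (\<lambda>x. ln \<bar>x\<bar>) (indicator {a..b}) x
         = integral {a..b} (\<lambda>y. (ln \<bar>x\<bar> - ln y) / (x - y))"
proof -
  have "(\<lambda>x::real. ln \<bar>x\<bar>) \<in> borel_measurable lebesgue"
    by (rule measurable_completion) measurable
  then show "commH (\<lambda>x. ln \<bar>x\<bar>) (indicator {a..b}) \<in> borel_measurable lebesgue"
    unfolding commH_def
    using assms hilbert_indicator_measurable[of a b] hilbert_ln_indicator_measurable[of a b]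
    by (intro borel_measurable_times borel_measurable_diff) auto
  assume x: "x < 0"
  have "(\<lambda>y. ln \<bar>x\<bar> * (1 / (x - y))) integrable_on {a..b}"
      "(\<lambda>y. ln \<bar>y\<bar> / (x - y)) integrable_on {a..b}"
    using assms x by (intro integrable_continuous_interval continuous_intros; auto)+
  then have "commH (\<lambda>x. ln \<bar>x\<bar>) (indicator {a..b}) x
      = integral {a..b} (\<lambda>y. ln \<bar>x\<bar> * (1 / (x - y)) - ln \<bar>y\<bar> / (x - y))"
    using x assms
    by (simp only: commH_def hilbert_indicator_left hilbert_ln_indicator_left integral_diff
        integral_mult_right order.strict_implies_order less_trans[OF x assms(1)])
  also have "\<dots> = integral {a..b} (\<lambda>y. (ln \<bar>x\<bar> - ln y) / (x - y))"
    using assms by (intro integral_cong) (auto simp: diff_divide_distrib)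
  finally show "commH (\<lambda>x. ln \<bar>x\<bar>) (indicator {a..b}) x
      = integral {a..b} (\<lambda>y. (ln \<bar>x\<bar> - ln y) / (x - y))" .
qed

subsection \<open>Weak-type lower bounds from indicator test functions\<close>

lemma weakLp_norm_ge_interval:
  fixes g :: "real \<Rightarrow> real"
  assumes g: "g \<in> borel_measurable lebesgue" and p: "p > 0" and t: "t > 0" and lu: "l < u"
    and above: "\<And>x. l < x \<Longrightarrow> x < u \<Longrightarrow> t < \<bar>g x\<bar>"
  shows "ereal (t * (u - l) powr (1 / p)) \<le> weakLp_norm p g"
proof -
  define M where "M = (SUP t\<in>{0<..}. ennreal (t powr p) * emeasure lebesgue {x. t < \<bar>g x\<bar>})"
  have "(\<lambda>x. \<bar>g x\<bar>) \<in> borel_measurable lebesgue" using g by measurable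
  then have "{x. t < \<bar>g x\<bar>} \<in> sets lebesgue"
    unfolding borel_measurable_iff_greater by simp
  then have "emeasure lebesgue {l<..<u} \<le> emeasure lebesgue {x. t < \<bar>g x\<bar>}"
    by (rule emeasure_mono[rotated]) (auto intro: above)
  then have "ennreal (u - l) \<le> emeasure lebesgue {x. t < \<bar>g x\<bar>}"
    using lu by simp
  then have "ennreal (t powr p) * ennreal (u - l) \<le> ennreal (t powr p) * emeasure lebesgue {x. t < \<bar>g x\<bar>}"
    by (rule mult_left_mono) simp
  also have "\<dots> \<le> M" unfolding M_def using t by (intro SUP_upper) auto
  finally have le: "ennreal (t powr p * (u - l)) \<le> M" using t lu by (simp add: ennreal_mult)
  show ?thesis
  proof (cases "M = \<infinity>")
    case True then show ?thesis by (simp add: weakLp_norm_def M_def[symmetric])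
  next
    case False
    then have "t powr p * (u - l) \<le> enn2real M"
      using enn2real_mono[OF le] lu by (simp add: top.not_eq_extremum)
    then have "(t powr p * (u - l)) powr (1 / p) \<le> enn2real M powr (1 / p)"
      using p t lu by (intro powr_mono2) auto
    moreover have "(t powr p * (u - l)) powr (1 / p) = t * (u - l) powr (1 / p)"
      using p t lu by (simp add: powr_mult powr_powr)
    ultimately show ?thesis using False by (simp add: weakLp_norm_def M_def[symmetric])
  qed
qed

lemma weakLp_norm_nonneg: "0 \<le> weakLp_norm p g"
proof -
  have "\<And>M::ennreal. 0 \<le> (if M = \<infinity> then \<infinity> else ereal (enn2real M powr (1 / p)))"
    by simp
  then show ?thesis unfolding weakLp_norm_def Let_def by blast
qed

lemma op_norm_Lp_weak_ge:
  assumes "in_Lp p f" "0 < Lp_norm p f" "Lp_norm p f \<le> 1"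
  shows "weakLp_norm p (T f) \<le> op_norm_Lp_weak p T"
proof -
  have "weakLp_norm p (T f) \<le> weakLp_norm p (T f) / ereal (Lp_norm p f)"
  proof (cases "weakLp_norm p (T f)")
    case (real r)
    then have "r \<le> r / Lp_norm p f"
      using weakLp_norm_nonneg[of p "T f"] assms(2,3) divide_left_mono[of "Lp_norm p f" 1 r] by simp
    then show ?thesis using real assms(2) by simp
  qed (use assms(2) weakLp_norm_nonneg[of p "T f"] in simp_all)
  also have "\<dots> \<le> op_norm_Lp_weak p T"
    unfolding op_norm_Lp_weak_def using assms by (intro SUP_upper) simp
  finally show ?thesis .
qed

lemma
  fixes c d :: real
  assumes "c \<le> d"
  shows in_Lp_indicator_interval: "in_Lp p (indicator {c..d})"
    and Lp_norm_indicator_interval: "Lp_norm p (indicator {c..d}) = (d - c) powr (1 / p)"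
proof -
  have pow: "(\<lambda>x. \<bar>indicator {c..d} x :: real\<bar> powr p) = (\<lambda>y. indicator {c..d} y * 1)"
    by (simp add: fun_eq_iff indicator_def)
  show "in_Lp p (indicator {c..d})"
    unfolding in_Lp_def pow using integrable_indicator_continuous_interval[of c d "\<lambda>_. 1"] by auto
  show "Lp_norm p (indicator {c..d}) = (d - c) powr (1 / p)"
    unfolding Lp_norm_def pow
    using lebesgue_integral_indicator_continuous_interval[of c d "\<lambda>_. 1"] assms by simp
qed

lemma op_norm_Lp_weak_ge_indicator:
  fixes T :: "(real \<Rightarrow> real) \<Rightarrow> real \<Rightarrow> real"
  assumes p: "p > 0" and cd: "c < d" "d - c \<le> 1"
    and meas: "T (indicator {c..d}) \<in> borel_measurable lebesgue"
    and t: "t > 0" and lu: "l < u" and above: "\<And>x. l < x \<Longrightarrow> x < u \<Longrightarrow> t < \<bar>T (indicator {c..d}) x\<bar>"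
  shows "ereal (t * (u - l) powr (1 / p)) \<le> op_norm_Lp_weak p T"
proof -
  have "0 < Lp_norm p (indicator {c..d})" "Lp_norm p (indicator {c..d}) \<le> 1"
    using cd p by (auto simp: Lp_norm_indicator_interval intro: powr_le1)
  then have "weakLp_norm p (T (indicator {c..d})) \<le> op_norm_Lp_weak p T"
    using cd by (intro op_norm_Lp_weak_ge in_Lp_indicator_interval) auto
  with weakLp_norm_ge_interval[OF meas p t lu above] show ?thesis
    by (rule order_trans)
qed

subsection \<open>Lower bounds for the Hilbert transform and its commutator with ln |x|\<close>

lemma hilbert_indicator_left_lower:
  assumes d: "0 < d" "d \<le> 1" and x: "- d < x" "x < 0"
  shows "- ln d / 2 \<le> - hilbert (indicator {d..1}) x"
proof -
  have "integral {d..1} (\<lambda>y. 1 / (2 * y)) = ln 1 / 2 - ln d / 2"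
    by (rule integral_real_derivative) (use d in \<open>auto intro!: derivative_eq_intros\<close>)
  then have "- ln d / 2 = integral {d..1} (\<lambda>y. 1 / (2 * y))" by simp
  also have "\<dots> \<le> integral {d..1} (\<lambda>y. - (1 / (x - y)))"
  proof (intro integral_le integrable_continuous_interval continuous_intros)
    fix y assume "y \<in> {d..1}"
    then have "0 < y - x" "y - x \<le> 2 * y" using x d by auto
    then show "1 / (2 * y) \<le> - (1 / (x - y))"
      by (simp add: minus_divide_right divide_left_mono)
  qed (use d x in auto)
  also have "\<dots> = - hilbert (indicator {d..1}) x"
    using d x by (simp add: hilbert_indicator_left integral_neg)
  finally show ?thesis .
qed

lemma commH_ln_indicator_left_lower:
  assumes d: "0 < d" "d < 1" and x: "- d < x" "x < 0"
  shows "(ln d)\<^sup>2 / 4 \<le> commH (\<lambda>x. ln \<bar>x\<bar>) (indicator {d..1}) x"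
proof -
  have "integral {d..1} (\<lambda>y. (ln y - ln d) / (2 * y)) = (ln 1 - ln d)\<^sup>2 / 4 - (ln d - ln d)\<^sup>2 / 4"
    by (rule integral_real_derivative)
      (use d in \<open>auto intro!: derivative_eq_intros simp: field_simps power2_eq_square\<close>)
  then have "(ln d)\<^sup>2 / 4 = integral {d..1} (\<lambda>y. (ln y - ln d) / (2 * y))" by simp
  also have "\<dots> \<le> integral {d..1} (\<lambda>y. (ln \<bar>x\<bar> - ln y) / (x - y))"
  proof (intro integral_le integrable_continuous_interval continuous_intros)
    fix y assume y: "y \<in> {d..1}"
    then have yx: "0 < y - x" "y - x \<le> 2 * y" using x d by auto
    have lx: "ln \<bar>x\<bar> < ln d" "ln d \<le> ln y" using x y d by auto
    have "(ln y - ln d) / (2 * y) \<le> (ln y - ln \<bar>x\<bar>) / (2 * y)"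
      using lx y d by (intro divide_right_mono) auto
    also have "\<dots> \<le> (ln y - ln \<bar>x\<bar>) / (y - x)"
      using yx lx by (intro divide_left_mono) auto
    also have "\<dots> = (ln \<bar>x\<bar> - ln y) / (x - y)"
      by (metis minus_diff_eq minus_divide_divide)
    finally show "(ln y - ln d) / (2 * y) \<le> (ln \<bar>x\<bar> - ln y) / (x - y)" .
  qed (use d x in auto)
  also have "\<dots> = commH (\<lambda>x. ln \<bar>x\<bar>) (indicator {d..1}) x"
    using d x by (simp add: commH_ln_indicator_negative)
  finally show ?thesis .
qed

lemma commH_ln_indicator_far_left_lower:
  assumes A: "0 < A" "2 \<le> ln A" and x: "- (2 * A) < x" "x < - A"
  shows "ln A / (6 * A) \<le> - commH (\<lambda>x. ln \<bar>x\<bar>) (indicator {1..2}) x"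
proof -
  have "1 + ln A \<le> A"
    using exp_ge_add_one_self[of "ln A"] A(1) by simp
  then have A3: "3 \<le> A" using A(2) by linarith
  have "ln A / (6 * A) = integral {1..2::real} (\<lambda>y. ln A / (6 * A))" by simp
  also have "\<dots> \<le> integral {1..2} (\<lambda>y. - ((ln \<bar>x\<bar> - ln y) / (x - y)))"
  proof (intro integral_le integrable_continuous_interval continuous_intros)
    fix y :: real assume y: "y \<in> {1..2}"
    then have yx: "0 < y - x" "y - x \<le> 3 * A" using x A3 by auto
    have "ln y \<le> ln 2" "ln A < ln \<bar>x\<bar>" using y x A(1) by auto
    then have num: "ln A / 2 \<le> ln \<bar>x\<bar> - ln y"
      using A(2) ln_2_less_1 by linarith
    have "ln A / (6 * A) = (ln A / 2) / (3 * A)" by simp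
    also have "\<dots> \<le> (ln \<bar>x\<bar> - ln y) / (3 * A)"
      using num A3 by (intro divide_right_mono) auto
    also have "\<dots> \<le> (ln \<bar>x\<bar> - ln y) / (y - x)"
      using yx num A by (intro divide_left_mono) auto
    also have "\<dots> = - ((ln \<bar>x\<bar> - ln y) / (x - y))"
      by (simp add: minus_divide_right)
    finally show "ln A / (6 * A) \<le> - ((ln \<bar>x\<bar> - ln y) / (x - y))" .
  qed (use x A3 in auto)
  also have "\<dots> = - commH (\<lambda>x. ln \<bar>x\<bar>) (indicator {1..2}) x"
    using x A3 by (simp add: commH_ln_indicator_negative)
  finally show ?thesis .
qed

lemma op_norm_Lp_weak_hilbert_ge:
  assumes p: "p > 0"
  shows "ereal (exp (-2) / 2 * p) \<le> op_norm_Lp_weak p hilbert"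
proof -
  define d where "d = exp (-2 * p)"
  have d: "0 < d" "d < 1" using p by (auto simp: d_def)
  have "ereal (p / 2 * (0 - - d) powr (1 / p)) \<le> op_norm_Lp_weak p hilbert"
  proof (rule op_norm_Lp_weak_ge_indicator[OF p d(2)])
    fix x assume "- d < x" "x < 0"
    then have "p \<le> - hilbert (indicator {d..1}) x"
      using hilbert_indicator_left_lower[of d x] d by (simp add: d_def)
    then show "p / 2 < \<bar>hilbert (indicator {d..1}) x\<bar>" using p by linarith
  qed (use d p hilbert_indicator_measurable[of d 1] in auto)
  moreover have "d powr (1 / p) = exp (-2)" using p by (simp add: powr_def d_def)
  ultimately show ?thesis by (simp add: mult.commute)
qed

lemma op_norm_Lp_weak_commH_ln_ge_square:
  assumes p: "p > 0"
  shows "ereal (exp (-2) / 2 * p\<^sup>2) \<le> op_norm_Lp_weak p (commH (\<lambda>x. ln \<bar>x\<bar>))"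
proof -
  define d where "d = exp (-2 * p)"
  have d: "0 < d" "d < 1" using p by (auto simp: d_def)
  have "ereal (p\<^sup>2 / 2 * (0 - - d) powr (1 / p)) \<le> op_norm_Lp_weak p (commH (\<lambda>x. ln \<bar>x\<bar>))"
  proof (rule op_norm_Lp_weak_ge_indicator[OF p d(2)])
    fix x assume "- d < x" "x < 0"
    then have "p\<^sup>2 \<le> commH (\<lambda>x. ln \<bar>x\<bar>) (indicator {d..1}) x"
      using commH_ln_indicator_left_lower[of d x] d by (simp add: d_def power2_eq_square)
    moreover have "0 < p\<^sup>2" using p by simp
    ultimately show "p\<^sup>2 / 2 < \<bar>commH (\<lambda>x. ln \<bar>x\<bar>) (indicator {d..1}) x\<bar>" by linarith
  qed (use d p commH_ln_indicator_measurable[of d 1] in auto)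
  moreover have "d powr (1 / p) = exp (-2)" using p by (simp add: powr_def d_def)
  ultimately show ?thesis by (simp add: mult.commute)
qed

lemma op_norm_Lp_weak_commH_ln_ge_conjugate:
  assumes p: "1 < p" "p \<le> 2"
  shows "ereal (exp (-2) / (6 * (p - 1))) \<le> op_norm_Lp_weak p (commH (\<lambda>x. ln \<bar>x\<bar>))"
proof -
  define A where "A = exp (2 / (p - 1))"
  have lnA: "ln A = 2 / (p - 1)" and A0: "0 < A" and A1: "1 < A" using p by (simp_all add: A_def)
  have lnA2: "2 \<le> ln A" unfolding lnA using p by (simp add: field_simps)
  define t where "t = ln A / (12 * A)"
  have t: "0 < t" "t < ln A / (6 * A)" unfolding t_def using lnA2 A1 by (auto simp: field_simps)
  have "exp (-2) / (6 * (p - 1)) \<le> exp (- 2 / p) / (6 * (p - 1))"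
    using p by (intro divide_right_mono) (auto simp: field_simps)
  also have "\<dots> = t * (- A - - (2 * A)) powr (1 / p)"
  proof -
    have "p - 1 \<noteq> 0" "p \<noteq> 0" using p by auto
    then have "ln A / p - ln A = - 2 / p"
      unfolding lnA by (simp add: divide_simps) (simp add: algebra_simps)
    moreover have "A powr (1 / p) / A = exp (ln A / p - ln A)"
      using A0 by (simp add: powr_def exp_diff)
    ultimately have "A powr (1 / p) / A = exp (- 2 / p)" by simp
    then show ?thesis
      unfolding t_def lnA using p A0 by (simp add: field_simps)
  qed
  finally have "ereal (exp (-2) / (6 * (p - 1))) \<le> ereal (t * (- A - - (2 * A)) powr (1 / p))"
    by simp
  also have "\<dots> \<le> op_norm_Lp_weak p (commH (\<lambda>x. ln \<bar>x\<bar>))"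
  proof (rule op_norm_Lp_weak_ge_indicator)
    fix x assume "- (2 * A) < x" "x < - A"
    then show "t < \<bar>commH (\<lambda>x. ln \<bar>x\<bar>) (indicator {1..2}) x\<bar>"
      using commH_ln_indicator_far_left_lower[OF A0 lnA2] t by fastforce
  qed (use p A0 t commH_ln_indicator_measurable[of 1 2] in auto)
  finally show ?thesis .
qed

lemma op_norm_Lp_weak_commH_ln_ge:
  assumes p: "1 < p"
  shows "ereal (exp (-2) / 24 * max (p / (p - 1)) (p\<^sup>2)) \<le> op_norm_Lp_weak p (commH (\<lambda>x. ln \<bar>x\<bar>))"
proof (cases "p \<le> 2")
  case True
  have "max (p / (p - 1)) (p\<^sup>2) \<le> 4 / (p - 1)"
  proof -
    have "p / (p - 1) \<le> 4 / (p - 1)" using p True by (intro divide_right_mono) auto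
    moreover have "p\<^sup>2 * (p - 1) \<le> 4 * 1"
      using p True power_mono[of p 2 2] by (intro mult_mono) auto
    then have "p\<^sup>2 \<le> 4 / (p - 1)" using p by (simp add: pos_le_divide_eq)
    ultimately show ?thesis by simp
  qed
  then have "exp (-2) / 24 * max (p / (p - 1)) (p\<^sup>2) \<le> exp (-2) / 24 * (4 / (p - 1))"
    by (rule mult_left_mono) simp
  also have "\<dots> = exp (-2) / (6 * (p - 1))" by simp
  finally have "ereal (exp (-2) / 24 * max (p / (p - 1)) (p\<^sup>2)) \<le> ereal (exp (-2) / (6 * (p - 1)))"
    by simp
  also have "\<dots> \<le> op_norm_Lp_weak p (commH (\<lambda>x. ln \<bar>x\<bar>))"
    using p True by (rule op_norm_Lp_weak_commH_ln_ge_conjugate)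
  finally show ?thesis .
next
  case False
  have "p / (p - 1) \<le> p" using False by (simp add: divide_le_eq mult_le_cancel_left1)
  also have "p \<le> p\<^sup>2" using p by (simp add: power2_eq_square)
  finally have "p / (p - 1) \<le> p\<^sup>2" .
  then have "ereal (exp (-2) / 24 * max (p / (p - 1)) (p\<^sup>2)) \<le> ereal (exp (-2) / 2 * p\<^sup>2)"
    by simp
  also have "\<dots> \<le> op_norm_Lp_weak p (commH (\<lambda>x. ln \<bar>x\<bar>))"
    using p by (intro op_norm_Lp_weak_commH_ln_ge_square) simp
  finally show ?thesis .
qed

theorem lemma1p2:
  "\<exists>c5 c6 :: real. c5 > 0 \<and> c6 > 0 \<and>
     (\<forall>p::real. 1 < p \<longrightarrow>
        op_norm_Lp_weak p hilbert \<ge> ereal (c5 * p) \<and>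
        op_norm_Lp_weak p (commH (\<lambda>x. ln \<bar>x\<bar>)) \<ge> ereal (c6 * max (p / (p - 1)) (p ^ 2)))"
  using op_norm_Lp_weak_hilbert_ge op_norm_Lp_weak_commH_ln_ge
  by (intro exI[of _ "exp (-2) / 2"] exI[of _ "exp (-2) / 24"]) auto

end
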